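(* For $n\geq 5$, the commutator subgroup $\Gamma_2(VB_n)$ of the virtual braid group $VB_n$ is perfect, i.e. $\Gamma_2(VB_n)=[\Gamma_2(VB_n),\Gamma_2(VB_n)]$.
   Context: The virtual braid group $VB_n$ is the group with generators $\sigma_i,\rho_i$ ($i=1,\dots,n-1$) and defining relations: $\sigma_i\sigma_{i+1}\sigma_i=\sigma_{i+1}\sigma_i\sigma_{i+1}$ ($1\le i\le n-2$); $\sigma_i\sigma_j=\sigma_j\sigma_i$ ($|i-j|\geq 2$); $\rho_i\rho_{i+1}\rho_i=\rho_{i+1}\rho_i\rho_{i+1}$ ($1\le i\le n-2$); $\rho_i\rho_j=\rho_j\rho_i$ ($|i-j|\geq 2$); $\rho_i^2=1$; $\sigma_i\rho_j=\rho_j\sigma_i$ ($|i-j|\geq2$); $\rho_i\rho_{i+1}\sigma_i=\sigma_{i+1}\rho_i\rho_{i+1}$ ($1\le i\le n-2$). $\Gamma_2(G)=[G,G]$. *)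

theory Defs
  imports "HOL-Algebra.Algebra"
begin

text \<open>Generators of the virtual braid group VB_n (1-based indices, 1 \<le> i \<le> n-1).\<close>
datatype vgen = Sig nat | Rho nat

text \<open>A letter is a generator with an exponent sign: True = +1, False = -1.\<close>
type_synonym vletter = "bool \<times> vgen"
type_synonym vword = "vletter list"

fun gidx :: "vgen \<Rightarrow> nat" where
  "gidx (Sig i) = i" | "gidx (Rho i) = i"

definition valid_letter :: "nat \<Rightarrow> vletter \<Rightarrow> bool" where
  "valid_letter n x \<longleftrightarrow> 1 \<le> gidx (snd x) \<and> gidx (snd x) \<le> n - 1"

definition valid_word :: "nat \<Rightarrow> vword \<Rightarrow> bool" where
  "valid_word n w \<longleftrightarrow> (\<forall>x\<in>set w. valid_letter n x)"

definition inv_letter :: "vletter \<Rightarrow> vletter" where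
  "inv_letter x = (\<not> fst x, snd x)"

abbreviation s :: "nat \<Rightarrow> vletter" where "s i \<equiv> (True, Sig i)"
abbreviation r :: "nat \<Rightarrow> vletter" where "r i \<equiv> (True, Rho i)"

text \<open>Defining relations of VB_n, as pairs (lhs, rhs) meaning lhs = rhs.\<close>
definition vb_relators :: "nat \<Rightarrow> (vword \<times> vword) set" where
  "vb_relators n =
     {([s i, s (i+1), s i], [s (i+1), s i, s (i+1)]) | i. 1 \<le> i \<and> i \<le> n - 2}
   \<union> {([s i, s j], [s j, s i]) | i j. 1 \<le> i \<and> i \<le> n - 1 \<and> 1 \<le> j \<and> j \<le> n - 1
                                    \<and> (i \<ge> j + 2 \<or> j \<ge> i + 2)}
   \<union> {([r i, r (i+1), r i], [r (i+1), r i, r (i+1)]) | i. 1 \<le> i \<and> i \<le> n - 2}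
   \<union> {([r i, r j], [r j, r i]) | i j. 1 \<le> i \<and> i \<le> n - 1 \<and> 1 \<le> j \<and> j \<le> n - 1
                                    \<and> (i \<ge> j + 2 \<or> j \<ge> i + 2)}
   \<union> {([r i, r i], []) | i. 1 \<le> i \<and> i \<le> n - 1}
   \<union> {([s i, r j], [r j, s i]) | i j. 1 \<le> i \<and> i \<le> n - 1 \<and> 1 \<le> j \<and> j \<le> n - 1
                                    \<and> (i \<ge> j + 2 \<or> j \<ge> i + 2)}
   \<union> {([r i, r (i+1), s i], [s (i+1), r i, r (i+1)]) | i. 1 \<le> i \<and> i \<le> n - 2}"

inductive vb_step :: "nat \<Rightarrow> vword \<Rightarrow> vword \<Rightarrow> bool" for n where
  cancel: "\<lbrakk>valid_word n a; valid_word n b; valid_letter n x\<rbrakk>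
           \<Longrightarrow> vb_step n (a @ [x, inv_letter x] @ b) (a @ b)"
| relator: "\<lbrakk>valid_word n a; valid_word n b; (u, v) \<in> vb_relators n\<rbrakk>
           \<Longrightarrow> vb_step n (a @ u @ b) (a @ v @ b)"

definition vb_eq :: "nat \<Rightarrow> vword \<Rightarrow> vword \<Rightarrow> bool" where
  "vb_eq n = (\<lambda>u v. vb_step n u v \<or> vb_step n v u)\<^sup>*\<^sup>*"

definition vb_class :: "nat \<Rightarrow> vword \<Rightarrow> vword set" where
  "vb_class n w = {v. vb_eq n w v}"

definition VB :: "nat \<Rightarrow> vword set monoid" where
  "VB n = \<lparr> carrier = {vb_class n w | w. valid_word n w},
            monoid.mult = (\<lambda>A B. vb_class n ((SOME a. a \<in> A) @ (SOME b. b \<in> B))),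
            monoid.one = vb_class n [] \<rparr>"

end

theory Submission
  imports Defs
begin

(* Call a family x 1, ..., x m of group elements a braid family if consecutive members satisfy
   the braid relation and members at distance at least 2 commute; in VB_n both sigma and rho
   are braid families with m = n - 1.  Since aba = bab and ab = ba force a = b, a braid family
   collapses to a single element in every abelian quotient, in particular modulo D = [G, G].
   Hence x1 x4^-1 and x2 x4^-1 lie in D and commute modulo [D, D]; as x4 commutes with x1 and x2,
   so do x1 and x2, hence they coincide modulo [D, D], and then the whole family collapses there.
   So G / [D, D] is generated by the images of sigma 1 and rho 1 = rho 3, which commute: it is
   abelian, i.e. D is contained in [D, D].  Besides the two braid families only the relation
   sigma 1 rho 3 = rho 3 sigma 1 is used; n >= 5 is needed for x4 to exist. *)

section \<open>Braid families in groups\<close>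

lemma (in group) inv_commute:
  assumes "x \<otimes> y = y \<otimes> x" "x \<in> carrier G" "y \<in> carrier G"
  shows "inv x \<otimes> y = y \<otimes> inv x"
proof -
  have "inv x \<otimes> y = inv x \<otimes> (y \<otimes> x) \<otimes> inv x"
    using assms(2,3) by (simp add: m_assoc)
  also have "\<dots> = inv x \<otimes> (x \<otimes> y) \<otimes> inv x"
    by (simp only: assms(1))
  also have "\<dots> = y \<otimes> inv x"
    using assms(2,3) by (simp add: m_assoc [symmetric])
  finally show ?thesis .
qed

definition braid_family :: "('a, 'b) monoid_scheme \<Rightarrow> nat \<Rightarrow> (nat \<Rightarrow> 'a) \<Rightarrow> bool" where
  "braid_family G m x \<longleftrightarrow>
     (\<forall>i. 1 \<le> i \<and> i \<le> m \<longrightarrow> x i \<in> carrier G) \<and>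
     (\<forall>i. 1 \<le> i \<and> i < m \<longrightarrow>
        x i \<otimes>\<^bsub>G\<^esub> x (i + 1) \<otimes>\<^bsub>G\<^esub> x i = x (i + 1) \<otimes>\<^bsub>G\<^esub> x i \<otimes>\<^bsub>G\<^esub> x (i + 1)) \<and>
     (\<forall>i j. 1 \<le> i \<and> i + 2 \<le> j \<and> j \<le> m \<longrightarrow> x i \<otimes>\<^bsub>G\<^esub> x j = x j \<otimes>\<^bsub>G\<^esub> x i)"

lemma
  assumes "braid_family G m x"
  shows braid_family_closed: "\<lbrakk>1 \<le> i; i \<le> m\<rbrakk> \<Longrightarrow> x i \<in> carrier G"
    and braid_family_braid: "\<lbrakk>1 \<le> i; i < m\<rbrakk> \<Longrightarrow>
           x i \<otimes>\<^bsub>G\<^esub> x (i + 1) \<otimes>\<^bsub>G\<^esub> x i = x (i + 1) \<otimes>\<^bsub>G\<^esub> x i \<otimes>\<^bsub>G\<^esub> x (i + 1)"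
    and braid_family_commute: "\<lbrakk>1 \<le> i; i + 2 \<le> j; j \<le> m\<rbrakk> \<Longrightarrow>
           x i \<otimes>\<^bsub>G\<^esub> x j = x j \<otimes>\<^bsub>G\<^esub> x i"
  using assms by (auto simp: braid_family_def)

lemma (in group_hom) braid_family_image:
  assumes "braid_family G m x"
  shows "braid_family H m (\<lambda>i. h (x i))"
  using assms unfolding braid_family_def by (auto simp flip: hom_mult intro!: arg_cong[where f = h])

lemma (in group) braid_commuting_eq:
  assumes a: "a \<in> carrier G" and b: "b \<in> carrier G"
    and braid: "a \<otimes> b \<otimes> a = b \<otimes> a \<otimes> b" and comm: "a \<otimes> b = b \<otimes> a"
  shows "a = b"
proof -
  have "a \<otimes> (a \<otimes> b) = a \<otimes> (b \<otimes> a)"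
    by (simp only: comm)
  also have "\<dots> = b \<otimes> a \<otimes> b"
    using a b by (simp add: braid flip: m_assoc)
  also have "\<dots> = a \<otimes> b \<otimes> b"
    by (simp only: comm)
  finally have "a \<otimes> (a \<otimes> b) = a \<otimes> (b \<otimes> b)"
    using a b by (simp add: m_assoc)
  then show ?thesis
    using a b by simp
qed

lemma (in group) braid_family_const:
  assumes x: "braid_family G m x" and x12: "x 1 = x 2" and i: "1 \<le> i" "i \<le> m"
  shows "x i = x 1"
proof -
  have succ: "x (Suc i) = x i" if "1 \<le> i" "i < m" for i
    using that
  proof (induction i rule: nat_induct_at_least)
    case base
    then show ?case
      using x12 by (simp add: numeral_2_eq_2)
  next
    case (Suc i)
    have closed: "x (Suc i) \<in> carrier G" "x (Suc (Suc i)) \<in> carrier G"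
      using braid_family_closed[OF x] Suc.prems Suc.hyps by auto
    have "x (Suc i) \<otimes> x (Suc (Suc i)) \<otimes> x (Suc i) =
          x (Suc (Suc i)) \<otimes> x (Suc i) \<otimes> x (Suc (Suc i))"
      using braid_family_braid[OF x, of "Suc i"] Suc by simp
    moreover have "x (Suc i) \<otimes> x (Suc (Suc i)) = x (Suc (Suc i)) \<otimes> x (Suc i)"
      using braid_family_commute[OF x, of i "i + 2"] Suc by simp
    ultimately have "x (Suc i) = x (Suc (Suc i))"
      by (rule braid_commuting_eq[OF closed])
    then show ?case
      by simp
  qed
  from i show ?thesis
    by (induction i rule: nat_induct_at_least) (simp_all add: succ)
qed

lemma (in comm_group) braid_family_const_comm:
  assumes x: "braid_family G m x" and i: "1 \<le> i" "i \<le> m"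
  shows "x i = x 1"
proof (cases "m < 2")
  case True
  with i have "i = 1"
    by linarith
  then show ?thesis
    by simp
next
  case False
  then have closed: "x 1 \<in> carrier G" "x 2 \<in> carrier G"
    using braid_family_closed[OF x] by auto
  have "x 1 \<otimes> x 2 \<otimes> x 1 = x 2 \<otimes> x 1 \<otimes> x 2"
    using braid_family_braid[OF x, of 1] False by (simp add: numeral_2_eq_2)
  then have "x 1 = x 2"
    using braid_commuting_eq[OF closed] m_comm[OF closed] by blast
  then show ?thesis
    by (rule braid_family_const[OF x _ i])
qed

lemma (in group) commuting_mult_rearrange:
  assumes "b \<otimes> c = c \<otimes> b" "a \<in> carrier G" "b \<in> carrier G" "c \<in> carrier G"
  shows "a \<otimes> c \<otimes> (b \<otimes> c) = a \<otimes> b \<otimes> (c \<otimes> c)"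
proof -
  have "a \<otimes> c \<otimes> (b \<otimes> c) = a \<otimes> (c \<otimes> b) \<otimes> c"
    using assms(2-4) by (simp add: m_assoc)
  also have "\<dots> = a \<otimes> (b \<otimes> c) \<otimes> c"
    by (simp only: assms(1))
  finally show ?thesis
    using assms(2-4) by (simp add: m_assoc)
qed

lemma (in group) braid_family_1_eq_2:
  assumes x: "braid_family G m x" "4 \<le> m"
    and comm: "x 1 \<otimes> inv x 4 \<otimes> (x 2 \<otimes> inv x 4) = x 2 \<otimes> inv x 4 \<otimes> (x 1 \<otimes> inv x 4)"
  shows "x 1 = x 2"
proof -
  have a: "x 1 \<in> carrier G" and b: "x 2 \<in> carrier G" and c: "inv x 4 \<in> carrier G"
    using braid_family_closed[OF x(1)] x(2) by auto
  have "x 1 \<otimes> x 4 = x 4 \<otimes> x 1" "x 2 \<otimes> x 4 = x 4 \<otimes> x 2"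
    using braid_family_commute[OF x(1), of 1 4] braid_family_commute[OF x(1), of 2 4] x(2)
    by simp_all
  then have "inv x 4 \<otimes> x 1 = x 1 \<otimes> inv x 4" "inv x 4 \<otimes> x 2 = x 2 \<otimes> inv x 4"
    using inv_commute braid_family_closed[OF x(1)] x(2) by simp_all
  then have "x 1 \<otimes> x 2 \<otimes> (inv x 4 \<otimes> inv x 4) = x 2 \<otimes> x 1 \<otimes> (inv x 4 \<otimes> inv x 4)"
    using comm commuting_mult_rearrange a b c by metis
  then have "x 1 \<otimes> x 2 = x 2 \<otimes> x 1"
    using a b c by simp
  moreover have "x 1 \<otimes> x 2 \<otimes> x 1 = x 2 \<otimes> x 1 \<otimes> x 2"
    using braid_family_braid[OF x(1), of 1] x(2) by (simp add: numeral_2_eq_2)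
  ultimately show ?thesis
    using braid_commuting_eq[OF a b] by blast
qed

lemma (in normal) group_hom_rcos: "group_hom G (G Mod H) (\<lambda>a. H #> a)"
  by (simp add: group_hom_def group_hom_axioms_def is_group factorgroup_is_group r_coset_hom_Mod)

lemma (in normal) carrier_FactGroup_eq_image: "carrier (G Mod H) = (\<lambda>a. H #> a) ` carrier G"
  by (auto simp: FactGroup_def RCOSETS_def)

lemma (in normal) rcos_commute_if_commutator_mem:
  assumes a: "a \<in> carrier G" and b: "b \<in> carrier G" and ab: "a \<otimes> b \<otimes> inv a \<otimes> inv b \<in> H"
  shows "(H #> a) \<otimes>\<^bsub>G Mod H\<^esub> (H #> b) = (H #> b) \<otimes>\<^bsub>G Mod H\<^esub> (H #> a)"
proof -
  have "a \<otimes> b \<otimes> inv (b \<otimes> a) = a \<otimes> b \<otimes> inv a \<otimes> inv b"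
    using a b by (simp add: inv_mult_group m_assoc)
  then have "H #> (a \<otimes> b \<otimes> inv (b \<otimes> a)) = H"
    using a b ab by (simp add: coset_join2 is_subgroup)
  then have "H #> (a \<otimes> b) = H #> (b \<otimes> a)"
    using a b by (simp add: coset_mult_inv1 subset)
  then show ?thesis
    using a b by (simp add: FactGroup_def rcos_sum)
qed

lemma (in normal) mult_inv_mem_if_rcos_eq:
  assumes "H #> a = H #> b" "a \<in> carrier G" "b \<in> carrier G"
  shows "a \<otimes> inv b \<in> H"
  using coset_mult_inv2[OF assms subset] assms(2,3) by (simp add: coset_join1 is_subgroup)

lemma (in group) commute_with_generate:
  assumes x: "x \<in> generate G S" and y: "y \<in> carrier G" and S: "S \<subseteq> carrier G"
    and comm: "\<And>s. s \<in> S \<Longrightarrow> s \<otimes> y = y \<otimes> s"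
  shows "x \<otimes> y = y \<otimes> x"
  using x
proof (induction rule: generate.induct)
  case (inv h)
  then show ?case
    using S y by (auto intro: inv_commute comm)
next
  case (eng h1 h2)
  have "h1 \<in> carrier G" "h2 \<in> carrier G"
    using eng.hyps generate_in_carrier[OF S] by auto
  with y have "h1 \<otimes> h2 \<otimes> y = h1 \<otimes> (y \<otimes> h2)"
    by (simp add: m_assoc eng.IH(2))
  also have "\<dots> = y \<otimes> h1 \<otimes> h2"
    using \<open>h1 \<in> carrier G\<close> \<open>h2 \<in> carrier G\<close> y by (simp add: eng.IH(1) flip: m_assoc)
  finally show ?case
    using \<open>h1 \<in> carrier G\<close> \<open>h2 \<in> carrier G\<close> y by (simp add: m_assoc)
qed (use y comm in auto)

lemma (in group) comm_group_if_generated_by_commuting: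
  assumes gen: "carrier G = generate G S" and S: "S \<subseteq> carrier G"
    and comm: "\<And>s t. s \<in> S \<Longrightarrow> t \<in> S \<Longrightarrow> s \<otimes> t = t \<otimes> s"
  shows "comm_group G"
proof (rule group_comm_groupI)
  fix x y
  assume "x \<in> carrier G" "y \<in> carrier G"
  have "s \<otimes> y = y \<otimes> s" if "s \<in> S" for s
    using commute_with_generate[of y S s] comm that S gen \<open>y \<in> carrier G\<close> by auto
  then show "x \<otimes> y = y \<otimes> x"
    using commute_with_generate[of x S y] S gen \<open>x \<in> carrier G\<close> \<open>y \<in> carrier G\<close> by auto
qed

lemma (in group) braid_family_const_mod_second_derived:
  assumes x: "braid_family G m x" "4 \<le> m" and i: "1 \<le> i" "i \<le> m"
  shows "derived G (derived G (carrier G)) #> x i = derived G (derived G (carrier G)) #> x 1"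
proof -
  define D where "D = derived G (carrier G)"
  define K where "K = derived G D"
  interpret D: normal D G
    unfolding D_def by (rule derived_self_is_normal)
  interpret K: normal K G
    unfolding K_def by (rule derived_is_normal[OF D.normal_axioms])
  interpret GD: comm_group "G Mod D"
    unfolding D_def by (rule derived_quot_is_comm_group)
  interpret qD: group_hom G "G Mod D" "\<lambda>a. D #> a"
    by (rule D.group_hom_rcos)
  interpret qK: group_hom G "G Mod K" "\<lambda>a. K #> a"
    by (rule K.group_hom_rcos)
  have closed: "x 1 \<in> carrier G" "x 2 \<in> carrier G" "x 4 \<in> carrier G"
    using braid_family_closed[OF x(1)] x(2) by auto
  have const: "D #> x j = D #> x 1" if "1 \<le> j" "j \<le> m" for j
    using GD.braid_family_const_comm[OF qD.braid_family_image[OF x(1)] that] .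
  have "D #> x 1 = D #> x 4" "D #> x 2 = D #> x 4"
    using const[of 4] const[of 2] x(2) by simp_all
  then have "x 1 \<otimes> inv x 4 \<in> D" "x 2 \<otimes> inv x 4 \<in> D"
    using D.mult_inv_mem_if_rcos_eq closed by blast+
  then have "x 1 \<otimes> inv x 4 \<otimes> (x 2 \<otimes> inv x 4) \<otimes> inv (x 1 \<otimes> inv x 4) \<otimes> inv (x 2 \<otimes> inv x 4) \<in> K"
    unfolding K_def derived_def by (blast intro: generate.incl)
  then have "(K #> (x 1 \<otimes> inv x 4)) \<otimes>\<^bsub>G Mod K\<^esub> (K #> (x 2 \<otimes> inv x 4)) =
             (K #> (x 2 \<otimes> inv x 4)) \<otimes>\<^bsub>G Mod K\<^esub> (K #> (x 1 \<otimes> inv x 4))"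
    using closed by (intro K.rcos_commute_if_commutator_mem) auto
  then have "K #> x 1 = K #> x 2"
    using qK.H.braid_family_1_eq_2[OF qK.braid_family_image[OF x(1)] x(2)] closed
    by (simp add: qK.hom_mult qK.hom_inv)
  then have "K #> x i = K #> x 1"
    by (rule qK.H.braid_family_const[OF qK.braid_family_image[OF x(1)] _ i])
  then show ?thesis
    unfolding K_def D_def .
qed

lemma (in normal) comm_group_FactGroup_if_generators_commute:
  assumes gen: "carrier G = generate G S" and S: "S \<subseteq> carrier G"
    and comm: "\<And>s t. s \<in> S \<Longrightarrow> t \<in> S \<Longrightarrow>
                 (H #> s) \<otimes>\<^bsub>G Mod H\<^esub> (H #> t) = (H #> t) \<otimes>\<^bsub>G Mod H\<^esub> (H #> s)"
  shows "comm_group (G Mod H)"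
proof -
  interpret q: group_hom G "G Mod H" "\<lambda>a. H #> a"
    by (rule group_hom_rcos)
  have "carrier (G Mod H) = (\<lambda>a. H #> a) ` generate G S"
    using carrier_FactGroup_eq_image gen by simp
  also have "\<dots> = generate (G Mod H) ((\<lambda>a. H #> a) ` S)"
    by (rule q.generate_img[OF S, symmetric])
  finally show ?thesis
    by (rule q.H.comm_group_if_generated_by_commuting) (use S comm in auto)
qed

theorem (in group) derived_perfect_if_generated_by_braid_families:
  assumes m: "4 \<le> m" and \<sigma>: "braid_family G m \<sigma>" and \<rho>: "braid_family G m \<rho>"
    and \<sigma>\<rho>: "\<sigma> 1 \<otimes> \<rho> 3 = \<rho> 3 \<otimes> \<sigma> 1"
    and gen: "carrier G = generate G (\<sigma> ` {1..m} \<union> \<rho> ` {1..m})"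
  shows "derived G (derived G (carrier G)) = derived G (carrier G)"
proof -
  define K where "K = derived G (derived G (carrier G))"
  interpret K: normal K G
    unfolding K_def by (rule derived_is_normal[OF derived_self_is_normal])
  interpret q: group_hom G "G Mod K" "\<lambda>a. K #> a"
    by (rule K.group_hom_rcos)
  let ?T = "\<sigma> ` {1..m} \<union> \<rho> ` {1..m}"
  have T: "?T \<subseteq> carrier G"
    using braid_family_closed[OF \<sigma>] braid_family_closed[OF \<rho>] by auto
  then have \<sigma>1: "\<sigma> 1 \<in> carrier G" and \<rho>3: "\<rho> 3 \<in> carrier G"
    using m by auto
  have \<sigma>_const: "K #> \<sigma> i = K #> \<sigma> 1" and \<rho>_const: "K #> \<rho> i = K #> \<rho> 1"
    if "1 \<le> i" "i \<le> m" for i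
    unfolding K_def using braid_family_const_mod_second_derived[OF _ m that] \<sigma> \<rho> by blast+
  have "(K #> \<sigma> 1) \<otimes>\<^bsub>G Mod K\<^esub> (K #> \<rho> 3) = (K #> \<rho> 3) \<otimes>\<^bsub>G Mod K\<^esub> (K #> \<sigma> 1)"
    using q.hom_mult[OF \<sigma>1 \<rho>3, symmetric] q.hom_mult[OF \<rho>3 \<sigma>1, symmetric] \<sigma>\<rho> by (simp only:)
  then have \<sigma>\<rho>_K: "(K #> \<sigma> 1) \<otimes>\<^bsub>G Mod K\<^esub> (K #> \<rho> 1) = (K #> \<rho> 1) \<otimes>\<^bsub>G Mod K\<^esub> (K #> \<sigma> 1)"
    using \<rho>_const[of 3] m by simp
  have two_classes: "K #> t \<in> {K #> \<sigma> 1, K #> \<rho> 1}" if t: "t \<in> ?T" for t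
  proof -
    obtain i where i: "1 \<le> i" "i \<le> m" and "t = \<sigma> i \<or> t = \<rho> i"
      using t by auto
    then show ?thesis
      using \<sigma>_const[OF i] \<rho>_const[OF i] by auto
  qed
  have "comm_group (G Mod K)"
  proof (rule K.comm_group_FactGroup_if_generators_commute[OF gen T])
    fix s t
    assume "s \<in> ?T" "t \<in> ?T"
    with two_classes[of s] two_classes[of t] \<sigma>\<rho>_K
    show "(K #> s) \<otimes>\<^bsub>G Mod K\<^esub> (K #> t) = (K #> t) \<otimes>\<^bsub>G Mod K\<^esub> (K #> s)"
      by auto
  qed
  then have "derived G (carrier G) \<subseteq> K"
    by (rule derived_minimal[OF K.normal_axioms])
  moreover have "K \<subseteq> derived G (carrier G)"
    unfolding K_def by (rule derived_incl[OF subset_refl derived_is_subgroup]) simp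
  ultimately show ?thesis
    unfolding K_def by blast
qed

section \<open>The virtual braid group\<close>

lemma valid_word_simps [simp]:
  "valid_word n []"
  "valid_word n (x # w) \<longleftrightarrow> valid_letter n x \<and> valid_word n w"
  "valid_word n (u @ v) \<longleftrightarrow> valid_word n u \<and> valid_word n v"
  by (auto simp: valid_word_def)

lemma valid_letter_inv_letter [simp]: "valid_letter n (inv_letter x) \<longleftrightarrow> valid_letter n x"
  by (simp add: valid_letter_def inv_letter_def)

lemma inv_letter_inv_letter [simp]: "inv_letter (inv_letter x) = x"
  by (simp add: inv_letter_def)

lemma vb_relators_valid: "(u, v) \<in> vb_relators n \<Longrightarrow> valid_word n u \<and> valid_word n v"
  unfolding vb_relators_def by (auto simp: valid_letter_def)

lemma vb_step_valid: "vb_step n u v \<Longrightarrow> valid_word n u \<and> valid_word n v"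
  by (induction rule: vb_step.induct) (auto dest: vb_relators_valid)

lemma vb_step_context:
  assumes "vb_step n u v" "valid_word n a" "valid_word n b"
  shows "vb_step n (a @ u @ b) (a @ v @ b)"
  using assms
proof (induction rule: vb_step.induct)
  case (cancel c d x)
  then show ?case using vb_step.cancel[of n "a @ c" "d @ b" x] by simp
next
  case (relator c d u v)
  then show ?case using vb_step.relator[of n "a @ c" "d @ b" u v] by simp
qed

lemma vb_eq_equivclp: "vb_eq n = equivclp (vb_step n)"
  unfolding vb_eq_def equivclp_def by (simp add: symclp_def [abs_def])

lemma vb_eq_valid: "vb_eq n u v \<Longrightarrow> valid_word n u \<Longrightarrow> valid_word n v"
  unfolding vb_eq_equivclp by (induction rule: equivclp_induct) (auto dest: vb_step_valid)

lemma vb_eq_context: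
  assumes "vb_eq n u v" "valid_word n a" "valid_word n b"
  shows "vb_eq n (a @ u @ b) (a @ v @ b)"
  using assms(1) unfolding vb_eq_equivclp
proof (induction rule: equivclp_induct)
  case (step y z)
  then show ?case
    using vb_step_context[OF _ assms(2,3)] by (blast intro: equivclp_into_equivclp)
qed simp

lemma vb_eq_append:
  assumes "vb_eq n u u'" "vb_eq n v v'" "valid_word n u" "valid_word n v"
  shows "vb_eq n (u @ v) (u' @ v')"
proof -
  have "vb_eq n (u @ v) (u' @ v)"
    using vb_eq_context[OF assms(1), of "[]" v] assms(4) by simp
  moreover have "vb_eq n (u' @ v) (u' @ v')"
    using vb_eq_context[OF assms(2), of u' "[]"] vb_eq_valid[OF assms(1,3)] by simp
  ultimately show ?thesis
    unfolding vb_eq_equivclp by (rule equivclp_trans)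
qed

lemma vb_class_eq_iff: "vb_class n u = vb_class n v \<longleftrightarrow> vb_eq n u v"
  unfolding vb_class_def vb_eq_equivclp
  by (auto intro: equivclp_trans equivclp_sym)

lemma vb_eq_some_class: "vb_eq n w (SOME v. v \<in> vb_class n w)"
proof -
  have "w \<in> vb_class n w"
    by (simp add: vb_class_def vb_eq_equivclp)
  then have "(SOME v. v \<in> vb_class n w) \<in> vb_class n w"
    by (rule someI)
  then show ?thesis
    by (simp add: vb_class_def)
qed

lemma vb_class_mult:
  assumes "valid_word n u" "valid_word n v"
  shows "vb_class n u \<otimes>\<^bsub>VB n\<^esub> vb_class n v = vb_class n (u @ v)"
proof -
  have "vb_eq n (u @ v) ((SOME a. a \<in> vb_class n u) @ (SOME b. b \<in> vb_class n v))"
    using vb_eq_append[OF vb_eq_some_class vb_eq_some_class assms] .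
  then show ?thesis
    by (simp add: VB_def vb_class_eq_iff vb_eq_equivclp equivclp_sym)
qed

lemma carrier_VB: "carrier (VB n) = {vb_class n w | w. valid_word n w}"
  by (simp add: VB_def)

lemma vb_class_in_carrier [simp]: "valid_word n w \<Longrightarrow> vb_class n w \<in> carrier (VB n)"
  by (auto simp: carrier_VB)

lemma one_VB: "\<one>\<^bsub>VB n\<^esub> = vb_class n []"
  by (simp add: VB_def)

definition inv_word :: "vword \<Rightarrow> vword" where
  "inv_word w = rev (map inv_letter w)"

lemma valid_inv_word [simp]: "valid_word n (inv_word w) \<longleftrightarrow> valid_word n w"
  by (auto simp: inv_word_def valid_word_def)

lemma vb_eq_inv_word_append: "valid_word n w \<Longrightarrow> vb_eq n (inv_word w @ w) []"
proof (induction w)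
  case (Cons x w)
  have "vb_step n (inv_word w @ [inv_letter x, inv_letter (inv_letter x)] @ w) (inv_word w @ w)"
    using Cons.prems by (intro vb_step.cancel) auto
  then have "vb_eq n (inv_word (x # w) @ x # w) (inv_word w @ w)"
    by (simp add: inv_word_def vb_eq_equivclp r_into_equivclp)
  with Cons show ?case
    unfolding vb_eq_equivclp by (auto intro: equivclp_trans)
qed (simp add: inv_word_def vb_eq_equivclp)

lemma group_VB: "group (VB n)"
proof (rule groupI)
  fix x
  assume "x \<in> carrier (VB n)"
  then obtain w where w: "valid_word n w" "x = vb_class n w"
    by (auto simp: carrier_VB)
  then have "vb_class n (inv_word w) \<otimes>\<^bsub>VB n\<^esub> x = \<one>\<^bsub>VB n\<^esub>"
    by (simp add: vb_class_mult one_VB vb_class_eq_iff vb_eq_inv_word_append)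
  moreover have "vb_class n (inv_word w) \<in> carrier (VB n)"
    using w by simp
  ultimately show "\<exists>y\<in>carrier (VB n). y \<otimes>\<^bsub>VB n\<^esub> x = \<one>\<^bsub>VB n\<^esub>"
    by blast
qed (auto simp: carrier_VB one_VB vb_class_mult)

lemma inv_VB: "valid_word n w \<Longrightarrow> inv\<^bsub>VB n\<^esub> (vb_class n w) = vb_class n (inv_word w)"
  by (rule group.inv_equality[OF group_VB])
     (auto simp: one_VB vb_class_mult vb_class_eq_iff vb_eq_inv_word_append)

definition vb_sigma :: "nat \<Rightarrow> nat \<Rightarrow> vword set" where
  "vb_sigma n i = vb_class n [s i]"

definition vb_rho :: "nat \<Rightarrow> nat \<Rightarrow> vword set" where
  "vb_rho n i = vb_class n [r i]"

lemma vb_class_relator: "(u, v) \<in> vb_relators n \<Longrightarrow> vb_class n u = vb_class n v"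
  using vb_step.relator[of n "[]" "[]" u v] by (simp add: vb_class_eq_iff vb_eq_equivclp r_into_equivclp)

lemma braid_family_vb_sigma: "braid_family (VB n) (n - 1) (vb_sigma n)"
  unfolding braid_family_def vb_sigma_def
  by (auto simp: vb_class_mult valid_letter_def intro!: vb_class_relator, simp_all add: vb_relators_def)

lemma braid_family_vb_rho: "braid_family (VB n) (n - 1) (vb_rho n)"
  unfolding braid_family_def vb_rho_def
  by (auto simp: vb_class_mult valid_letter_def intro!: vb_class_relator, simp_all add: vb_relators_def)

lemma vb_sigma_rho_commute:
  assumes "1 \<le> i" "i + 2 \<le> j" "j \<le> n - 1"
  shows "vb_sigma n i \<otimes>\<^bsub>VB n\<^esub> vb_rho n j = vb_rho n j \<otimes>\<^bsub>VB n\<^esub> vb_sigma n i"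
  using assms unfolding vb_sigma_def vb_rho_def
  by (simp add: vb_class_mult valid_letter_def, intro vb_class_relator, simp add: vb_relators_def)

lemma vb_class_letter_in_generate:
  assumes x: "valid_letter n x"
  shows "vb_class n [x] \<in> generate (VB n) (vb_sigma n ` {1..n - 1} \<union> vb_rho n ` {1..n - 1})"
proof -
  obtain e g where eg: "x = (e, g)"
    by force
  have positive: "vb_class n [(True, g)] \<in> vb_sigma n ` {1..n - 1} \<union> vb_rho n ` {1..n - 1}"
    using x eg by (cases g) (auto simp: valid_letter_def vb_sigma_def vb_rho_def)
  show ?thesis
  proof (cases e)
    case True
    with positive eg show ?thesis
      by (simp add: generate.incl)
  next
    case False
    have "vb_class n [x] = inv\<^bsub>VB n\<^esub> vb_class n [(True, g)]"
      using x eg False by (simp add: inv_VB inv_word_def inv_letter_def valid_letter_def)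
    with positive show ?thesis
      by (simp add: generate.inv)
  qed
qed

lemma generate_VB: "carrier (VB n) = generate (VB n) (vb_sigma n ` {1..n - 1} \<union> vb_rho n ` {1..n - 1})"
proof
  have "vb_sigma n ` {1..n - 1} \<union> vb_rho n ` {1..n - 1} \<subseteq> carrier (VB n)"
    by (auto simp: vb_sigma_def vb_rho_def valid_letter_def)
  then show "generate (VB n) (vb_sigma n ` {1..n - 1} \<union> vb_rho n ` {1..n - 1}) \<subseteq> carrier (VB n)"
    by (rule group.generate_incl[OF group_VB])
next
  have "vb_class n w \<in> generate (VB n) (vb_sigma n ` {1..n - 1} \<union> vb_rho n ` {1..n - 1})"
    if "valid_word n w" for w
    using that
  proof (induction w)
    case Nil
    then show ?case
      using generate.one[of "VB n"] by (simp add: one_VB)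
  next
    case (Cons x w)
    then have "vb_class n [x] \<otimes>\<^bsub>VB n\<^esub> vb_class n w
                 \<in> generate (VB n) (vb_sigma n ` {1..n - 1} \<union> vb_rho n ` {1..n - 1})"
      by (intro generate.eng vb_class_letter_in_generate) simp_all
    with Cons.prems show ?case
      by (simp add: vb_class_mult)
  qed
  then show "carrier (VB n) \<subseteq> generate (VB n) (vb_sigma n ` {1..n - 1} \<union> vb_rho n ` {1..n - 1})"
    by (auto simp: carrier_VB)
qed

theorem proposition4p5:
  fixes n :: nat
  assumes "n \<ge> 5"
  shows "derived (VB n) (derived (VB n) (carrier (VB n))) = derived (VB n) (carrier (VB n))"
proof (rule group.derived_perfect_if_generated_by_braid_families[OF group_VB])
  show "4 \<le> n - 1"
    using assms by simp
  show "vb_sigma n 1 \<otimes>\<^bsub>VB n\<^esub> vb_rho n 3 = vb_rho n 3 \<otimes>\<^bsub>VB n\<^esub> vb_sigma n 1"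
    using assms by (intro vb_sigma_rho_commute) auto
qed (fact braid_family_vb_sigma braid_family_vb_rho generate_VB)+

end
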